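(* Let $f, g:\mathbb{D}\to\mathbb{C}$ be analytic functions on the open unit disc, and let $L_1, L_2$ be two line segments in $\mathbb{D}$ intersecting at a point $p$ at an angle $\theta\in(0,\pi/2)\setminus\pi\mathbb{Q}$. Suppose there are sequences $(a_n)\subset L_1\setminus\{p\}$ and $(b_n)\subset L_2\setminus\{p\}$ tending to $p$ such that $|f(a_n)|=|g(a_n)|$ and $|f(b_n)|=|g(b_n)|$ for all $n$. Then $f=\beta g$ for some constant $\beta\in\mathbb{T}$.
   Context: $\mathbb{D}=\{z\in\mathbb{C}:|z|<1\}$ and $\mathbb{T}=\{z\in\mathbb{C}:|z|=1\}$. $\pi\mathbb{Q}$ denotes the set of rational multiples of $\pi$. *)

theory Defs
  imports "HOL-Analysis.Analysis"
begin

definition is_line_segment :: "complex set \<Rightarrow> bool" where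
  "is_line_segment L \<longleftrightarrow> (\<exists>u v. u \<noteq> v \<and> L = closed_segment u v)"

text \<open>The (unoriented) angle in [0, pi/2] between the lines carrying two segments,
  computed from their direction vectors.\<close>
definition seg_angle :: "complex set \<Rightarrow> complex set \<Rightarrow> real" where
  "seg_angle L1 L2 = (THE t. \<exists>u1 v1 u2 v2. u1 \<noteq> v1 \<and> u2 \<noteq> v2 \<and>
      L1 = closed_segment u1 v1 \<and> L2 = closed_segment u2 v2 \<and>
      t = arccos (\<bar>Re ((v1 - u1) * cnj (v2 - u2))\<bar> / (cmod (v1 - u1) * cmod (v2 - u2))))"

end

theory Submission
  imports Defs "HOL-Complex_Analysis.Complex_Analysis"
begin

text \<open>
  If \<open>|f| = |g|\<close> on a sequence in a line through \<open>p\<close> tending to \<open>p\<close>, the identity theorem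
  gives \<open>f w \<cdot> cnj (f w') = g w \<cdot> cnj (g w')\<close> near \<open>p\<close>, where \<open>w'\<close> is the mirror image of \<open>w\<close>
  in that line. For the quotient \<open>h = f / g\<close> this says \<open>h w \<cdot> cnj (h w') = 1\<close> for both lines,
  so \<open>h\<close> is invariant under the composite of the two reflections, the rotation about \<open>p\<close> by
  \<open>2\<theta>\<close>. As \<open>\<theta>/\<pi>\<close> is irrational, the orbit of a point under this rotation is an infinite
  subset of a circle, hence accumulates, and \<open>h\<close> is constant; its modulus is \<open>1\<close> by the
  reflection identity. The degenerate case \<open>g \<equiv> 0\<close> is handled by the same identity.
\<close>

text \<open>For \<open>|\<mu>| = 1\<close> this is the reflection in the line through \<open>p\<close> with direction \<open>\<surd>\<mu>\<close>; the
  line through \<open>u\<close> and \<open>v\<close> corresponds to \<open>\<mu> = (v - u) / cnj (v - u)\<close>.\<close>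

definition line_reflection :: "complex \<Rightarrow> complex \<Rightarrow> complex \<Rightarrow> complex" where
  "line_reflection p \<mu> w = p + \<mu> * cnj (w - p)"

lemma dist_line_reflection:
  assumes "cmod \<mu> = 1"
  shows "dist p (line_reflection p \<mu> w) = dist p w"
  using assms by (simp add: line_reflection_def dist_norm norm_mult norm_minus_commute
      complex_cnj_diff [symmetric] del: complex_cnj_diff)

lemma line_reflection_in_punctured_ball:
  assumes "cmod \<mu> = 1" and "w \<in> ball p r - {p}"
  shows "line_reflection p \<mu> w \<in> ball p r - {p}"
  using assms dist_line_reflection [OF assms(1), of p w] by auto

lemma line_reflection_line_reflection:
  "line_reflection p \<mu>1 (line_reflection p \<mu>2 w) = p + \<mu>1 * cnj \<mu>2 * (w - p)"
  by (simp add: line_reflection_def algebra_simps)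

lemma mult_cnj_eq_1_iff: "z * cnj z = 1 \<longleftrightarrow> cmod z = 1"
proof -
  have "z * cnj z = 1 \<longleftrightarrow> (cmod z)\<^sup>2 = 1"
    by (simp only: complex_norm_square [symmetric] of_real_eq_1_iff)
  also have "\<dots> \<longleftrightarrow> cmod z = 1"
    by (simp add: abs_square_eq_1)
  finally show ?thesis .
qed

lemma line_reflection_involution:
  assumes "cmod \<mu> = 1"
  shows "line_reflection p \<mu> (line_reflection p \<mu> w) = w"
proof -
  have "\<mu> * cnj \<mu> = 1"
    using assms by (simp add: mult_cnj_eq_1_iff)
  then show ?thesis
    by (simp add: line_reflection_line_reflection)
qed

lemma norm_div_cnj_self:
  assumes "z \<noteq> 0"
  shows "cmod (z / cnj z) = 1"
  using assms by (simp add: norm_divide)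

lemma line_reflection_fixes_segment:
  assumes "u \<noteq> v" and "x \<in> closed_segment u v" and "p \<in> closed_segment u v"
  shows "line_reflection p ((v - u) / cnj (v - u)) x = x"
proof -
  obtain s t where x: "x = (1 - s) *\<^sub>R u + s *\<^sub>R v" and p: "p = (1 - t) *\<^sub>R u + t *\<^sub>R v"
    using assms(2,3) unfolding closed_segment_def by blast
  have "x = p + of_real (s - t) * (v - u)"
    unfolding x p scaleR_conv_of_real by (simp add: algebra_simps)
  then show ?thesis
    using assms(1) by (simp add: line_reflection_def)
qed

lemma holomorphic_on_cnj_line_reflection:
  assumes f: "f holomorphic_on ball p r" and \<mu>: "cmod \<mu> = 1"
  shows "(\<lambda>w. cnj (f (line_reflection p \<mu> w))) holomorphic_on ball p r"
proof -
  have "cnj ` ball (cnj p) r = ball p r"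
    by (auto simp: image_cnj_conv_vimage_cnj dist_norm complex_cnj_diff [symmetric]
        simp del: complex_cnj_diff)
  then have "(cnj \<circ> f \<circ> cnj) holomorphic_on ball (cnj p) r"
    using f by (intro holomorphic_on_compose_cnj_cnj) auto
  moreover have "(\<lambda>w. cnj p + cnj \<mu> * (w - p)) holomorphic_on ball p r"
    by (intro holomorphic_intros)
  moreover have "(\<lambda>w. cnj p + cnj \<mu> * (w - p)) ` ball p r \<subseteq> ball (cnj p) r"
    using \<mu> by (auto simp: dist_norm norm_mult norm_minus_commute)
  ultimately have "((cnj \<circ> f \<circ> cnj) \<circ> (\<lambda>w. cnj p + cnj \<mu> * (w - p))) holomorphic_on ball p r"
    by (metis holomorphic_on_compose_gen)
  then show ?thesis
    by (simp add: o_def line_reflection_def)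
qed

lemma reflected_product_eq_if_norm_eq_on_line:
  assumes f: "f holomorphic_on ball p r" and g: "g holomorphic_on ball p r"
    and \<mu>: "cmod \<mu> = 1"
    and fixed: "\<And>n. line_reflection p \<mu> (a n) = a n"
    and "\<And>n. a n \<noteq> p" and "a \<longlonglongrightarrow> p"
    and norm_eq: "\<And>n. cmod (f (a n)) = cmod (g (a n))"
    and w: "w \<in> ball p r"
  shows "f w * cnj (f (line_reflection p \<mu> w)) = g w * cnj (g (line_reflection p \<mu> w))"
proof -
  define H where
    "H w = f w * cnj (f (line_reflection p \<mu> w)) - g w * cnj (g (line_reflection p \<mu> w))" for w
  have "H holomorphic_on ball p r"
    unfolding H_def by (intro holomorphic_intros holomorphic_on_cnj_line_reflection f g \<mu>)
  moreover have p: "p \<in> ball p r"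
    using w by (auto intro: le_less_trans [OF zero_le_dist])
  moreover have "H z = 0" if "z \<in> range a" for z
    using that by (auto simp: H_def fixed complex_norm_square [symmetric] norm_eq)
  moreover have "p islimpt range a \<inter> ball p r"
  proof (rule islimpt_Int_eventually)
    show "p islimpt range a"
      unfolding islimpt_sequential using assms by blast
    show "\<forall>\<^sub>F y in at p. y \<in> ball p r"
      using p by (intro eventually_at_in_open') auto
  qed
  ultimately have "H w = 0"
    using analytic_continuation [of H "ball p r" "range a \<inter> ball p r"] w by blast
  then show ?thesis
    by (simp add: H_def)
qed

lemma reflected_product_eq_if_norm_eq_on_segment:
  assumes f: "f holomorphic_on ball p r" and g: "g holomorphic_on ball p r"
    and "u \<noteq> v" and "p \<in> closed_segment u v"
    and "\<And>n. a n \<in> closed_segment u v - {p}" and "a \<longlonglongrightarrow> p"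
    and "\<And>n. cmod (f (a n)) = cmod (g (a n))"
    and "w \<in> ball p r"
  shows "f w * cnj (f (line_reflection p ((v - u) / cnj (v - u)) w)) =
    g w * cnj (g (line_reflection p ((v - u) / cnj (v - u)) w))"
proof (rule reflected_product_eq_if_norm_eq_on_line [OF f g])
  show "cmod ((v - u) / cnj (v - u)) = 1"
    using norm_div_cnj_self [of "v - u"] \<open>u \<noteq> v\<close> by simp
qed (use assms line_reflection_fixes_segment in auto)

lemma inj_power_mult:
  fixes \<omega> z :: "'a::{idom}"
  assumes "\<omega> \<noteq> 0" and not_root: "\<And>n. n > 0 \<Longrightarrow> \<omega> ^ n \<noteq> 1" and "z \<noteq> 0"
  shows "inj (\<lambda>n. \<omega> ^ n * z)"
proof (rule injI)
  have "\<omega> ^ m \<noteq> \<omega> ^ n" if "m < n" for m n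
  proof
    have "\<omega> ^ n = \<omega> ^ m * \<omega> ^ (n - m)"
      using that by (simp add: power_add [symmetric])
    moreover assume "\<omega> ^ m = \<omega> ^ n"
    ultimately have "\<omega> ^ m * \<omega> ^ (n - m) = \<omega> ^ m * 1"
      by simp
    then show False
      using not_root [of "n - m"] that assms(1) by simp
  qed
  moreover fix m n assume "\<omega> ^ m * z = \<omega> ^ n * z"
  ultimately show "m = n"
    using assms(3) by (metis linorder_neqE_nat mult_cancel_right)
qed

lemma constant_on_punctured_ball_if_rotation_invariant:
  assumes h: "h holomorphic_on ball p r - {p}" and r: "r > 0"
    and \<omega>: "cmod \<omega> = 1" and not_root: "\<And>n. n > 0 \<Longrightarrow> \<omega> ^ n \<noteq> 1"
    and invariant: "\<And>z. z \<in> ball p r - {p} \<Longrightarrow> h (p + \<omega> * (z - p)) = h z"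
  shows "h constant_on ball p r - {p}"
proof -
  define orbit where "orbit n = p + \<omega> ^ n * of_real (r / 2)" for n
  have sphere: "sphere p (r / 2) \<subseteq> ball p r - {p}"
    using r by auto
  have orbit_sphere: "range orbit \<subseteq> sphere p (r / 2)"
    using r \<omega> by (auto simp: orbit_def dist_norm norm_mult norm_power)
  have "h (orbit n) = h (orbit 0)" for n
  proof (induction n)
    case (Suc n)
    have "orbit (Suc n) = p + \<omega> * (orbit n - p)"
      by (simp add: orbit_def)
    moreover have "orbit n \<in> ball p r - {p}"
      using orbit_sphere sphere by blast
    ultimately show ?case
      using Suc invariant by simp
  qed simp
  then have "h constant_on range orbit"
    unfolding constant_on_def by auto
  moreover have "infinite (range orbit)"
  proof (rule range_inj_infinite)
    have "\<omega> \<noteq> 0"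
      using \<omega> by auto
    then show "inj orbit"
      using inj_power_mult [OF _ not_root, of "of_real (r / 2)"] r
      unfolding inj_def orbit_def by auto
  qed
  then obtain \<zeta> where "\<zeta> \<in> sphere p (r / 2)" and "\<zeta> islimpt range orbit"
    using compact_sphere [of p "r / 2"] orbit_sphere
    unfolding compact_eq_Bolzano_Weierstrass by blast
  moreover have "open (ball p r - {p})" and "connected (ball p r - {p})"
    by (auto simp: open_delete connected_punctured_ball)
  ultimately show ?thesis
    using analytic_continuation' [OF h _ _ order.trans [OF orbit_sphere sphere]] sphere
    by blast
qed

lemma holomorphic_nonzero_on_punctured_ball:
  assumes f: "f holomorphic_on ball p r" and z: "z \<in> ball p r" "f z \<noteq> 0"
  obtains d where "0 < d" "d \<le> r" "\<And>w. w \<in> ball p d - {p} \<Longrightarrow> f w \<noteq> 0"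
proof -
  have p: "p \<in> ball p r"
    using z by (auto intro: le_less_trans [OF zero_le_dist])
  have "\<forall>\<^sub>F w in at p. f w \<noteq> 0 \<and> w \<in> ball p r"
    using non_zero_neighbour_alt [OF f open_ball connected_ball p z] .
  then obtain d where "d > 0" "\<And>w. w \<noteq> p \<Longrightarrow> dist w p < d \<Longrightarrow> f w \<noteq> 0"
    unfolding eventually_at by auto
  then show ?thesis
    using that [of "min d r"] p by (auto simp: dist_commute)
qed

lemma zero_if_reflected_product_zero:
  assumes f: "f holomorphic_on ball p r" and \<mu>: "cmod \<mu> = 1"
    and product_zero: "\<And>w. w \<in> ball p r \<Longrightarrow> f w * cnj (f (line_reflection p \<mu> w)) = 0"
    and w: "w \<in> ball p r"
  shows "f w = 0"
proof (rule ccontr)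
  assume "f w \<noteq> 0"
  then obtain d where d: "0 < d" "d \<le> r" and nonzero: "\<And>w. w \<in> ball p d - {p} \<Longrightarrow> f w \<noteq> 0"
    using holomorphic_nonzero_on_punctured_ball [OF f w] by blast
  define z where "z = p + of_real (d / 2)"
  have z: "z \<in> ball p d - {p}"
    using d by (simp add: z_def dist_norm)
  then have "line_reflection p \<mu> z \<in> ball p d - {p}"
    by (rule line_reflection_in_punctured_ball [OF \<mu>])
  then have "f z * cnj (f (line_reflection p \<mu> z)) \<noteq> 0"
    using nonzero z by simp
  moreover have "z \<in> ball p r"
    using z d by auto
  ultimately show False
    using product_zero by blast
qed

lemma proportional_on_punctured_ball_if_reflection_identities:
  assumes f: "f holomorphic_on ball p r" and g: "g holomorphic_on ball p r" and r: "r > 0"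
    and g_nonzero: "\<And>w. w \<in> ball p r - {p} \<Longrightarrow> g w \<noteq> 0"
    and \<mu>1: "cmod \<mu>1 = 1" and \<mu>2: "cmod \<mu>2 = 1"
    and not_root: "\<And>n. n > 0 \<Longrightarrow> (\<mu>1 * cnj \<mu>2) ^ n \<noteq> 1"
    and reflection_identity:
      "\<And>\<mu> w. \<mu> \<in> {\<mu>1, \<mu>2} \<Longrightarrow> w \<in> ball p r \<Longrightarrow>
        f w * cnj (f (line_reflection p \<mu> w)) = g w * cnj (g (line_reflection p \<mu> w))"
  shows "\<exists>c. cmod c = 1 \<and> (\<forall>w\<in>ball p r - {p}. f w = c * g w)"
proof -
  define h where "h w = f w / g w" for w
  have ratio_identity: "h w * cnj (h (line_reflection p \<mu> w)) = 1"
    if "\<mu> \<in> {\<mu>1, \<mu>2}" and w: "w \<in> ball p r - {p}" for \<mu> w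
  proof -
    have "cmod \<mu> = 1"
      using that \<mu>1 \<mu>2 by auto
    then have "g (line_reflection p \<mu> w) \<noteq> 0"
      using g_nonzero line_reflection_in_punctured_ball w by blast
    then show ?thesis
      using reflection_identity [OF that(1)] g_nonzero w by (simp add: h_def field_simps)
  qed
  have "h (p + \<mu>1 * cnj \<mu>2 * (z - p)) = h z" if z: "z \<in> ball p r - {p}" for z
  proof -
    define w where "w = line_reflection p \<mu>2 z"
    have w: "w \<in> ball p r - {p}"
      unfolding w_def using line_reflection_in_punctured_ball [OF \<mu>2 z] .
    then have "h w * cnj (h (line_reflection p \<mu>1 w)) = h w * cnj (h (line_reflection p \<mu>2 w))"
      and "h w \<noteq> 0"
      using ratio_identity [of \<mu>1 w] ratio_identity [of \<mu>2 w] by auto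
    then have "h (line_reflection p \<mu>1 w) = h (line_reflection p \<mu>2 w)"
      by simp
    moreover have "line_reflection p \<mu>1 w = p + \<mu>1 * cnj \<mu>2 * (z - p)"
      by (simp add: w_def line_reflection_line_reflection)
    moreover have "line_reflection p \<mu>2 w = z"
      by (simp add: w_def line_reflection_involution [OF \<mu>2])
    ultimately show ?thesis
      by simp
  qed
  moreover have "h holomorphic_on ball p r - {p}"
    unfolding h_def using g_nonzero
    by (intro holomorphic_intros holomorphic_on_subset [OF f] holomorphic_on_subset [OF g]) auto
  moreover have "cmod (\<mu>1 * cnj \<mu>2) = 1"
    using \<mu>1 \<mu>2 by (simp add: norm_mult)
  ultimately have "h constant_on ball p r - {p}"
    using constant_on_punctured_ball_if_rotation_invariant r not_root by blast
  then obtain c where c: "\<And>w. w \<in> ball p r - {p} \<Longrightarrow> h w = c"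
    unfolding constant_on_def by blast
  define w0 where "w0 = p + of_real (r / 2)"
  have w0: "w0 \<in> ball p r - {p}"
    using r by (simp add: w0_def dist_norm)
  then have "c * cnj c = 1"
    using ratio_identity [of \<mu>1 w0] c line_reflection_in_punctured_ball [OF \<mu>1 w0] by simp
  then have "cmod c = 1"
    by (simp add: mult_cnj_eq_1_iff)
  moreover have "f w = c * g w" if "w \<in> ball p r - {p}" for w
    using c [OF that] g_nonzero [OF that] by (simp add: h_def field_simps)
  ultimately show ?thesis
    by blast
qed

lemma proportional_if_reflection_identities:
  assumes f: "f holomorphic_on ball p r" and g: "g holomorphic_on ball p r"
    and \<mu>1: "cmod \<mu>1 = 1" and \<mu>2: "cmod \<mu>2 = 1"
    and not_root: "\<And>n. n > 0 \<Longrightarrow> (\<mu>1 * cnj \<mu>2) ^ n \<noteq> 1"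
    and reflection_identity:
      "\<And>\<mu> w. \<mu> \<in> {\<mu>1, \<mu>2} \<Longrightarrow> w \<in> ball p r \<Longrightarrow>
        f w * cnj (f (line_reflection p \<mu> w)) = g w * cnj (g (line_reflection p \<mu> w))"
  shows "\<exists>c. cmod c = 1 \<and> (\<forall>w\<in>ball p r. f w = c * g w)"
proof (cases "\<exists>z\<in>ball p r. g z \<noteq> 0")
  case True
  then obtain d where d: "0 < d" "d \<le> r" and g_nonzero: "\<And>w. w \<in> ball p d - {p} \<Longrightarrow> g w \<noteq> 0"
    using holomorphic_nonzero_on_punctured_ball [OF g] by blast
  have sub: "ball p d \<subseteq> ball p r"
    using d by auto
  obtain c where c: "cmod c = 1" "\<forall>w\<in>ball p d - {p}. f w = c * g w"
    using proportional_on_punctured_ball_if_reflection_identities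
      [OF holomorphic_on_subset [OF f sub] holomorphic_on_subset [OF g sub] d(1) g_nonzero \<mu>1 \<mu>2
        not_root reflection_identity] sub by blast
  have "p + of_real (d / 2) \<in> ball p d - {p}"
    using d(1) by (simp add: dist_norm)
  then have nonempty: "ball p d - {p} \<noteq> {}"
    by blast
  have "f w = c * g w" if "w \<in> ball p r" for w
  proof (rule analytic_continuation_open [OF _ open_ball nonempty connected_ball _ f])
    show "(\<lambda>w. c * g w) holomorphic_on ball p r"
      using g by (intro holomorphic_intros)
  qed (use c(2) sub that in \<open>auto simp: open_delete\<close>)
  then show ?thesis
    using c(1) by blast
next
  case False
  then have "f w = 0" if "w \<in> ball p r" for w
    using zero_if_reflected_product_zero [OF f \<mu>1 _ that] reflection_identity [of \<mu>1] by auto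
  then show ?thesis
    using False by (intro exI [of _ 1]) auto
qed

lemma seg_angle_closed_segment:
  assumes "u1 \<noteq> v1" and "u2 \<noteq> v2"
  shows "seg_angle (closed_segment u1 v1) (closed_segment u2 v2) =
    arccos (\<bar>Re ((v1 - u1) * cnj (v2 - u2))\<bar> / (cmod (v1 - u1) * cmod (v2 - u2)))"
  unfolding seg_angle_def
proof (rule the_equality)
  fix t
  assume "\<exists>u1' v1' u2' v2'. u1' \<noteq> v1' \<and> u2' \<noteq> v2' \<and>
    closed_segment u1 v1 = closed_segment u1' v1' \<and> closed_segment u2 v2 = closed_segment u2' v2' \<and>
    t = arccos (\<bar>Re ((v1' - u1') * cnj (v2' - u2'))\<bar> / (cmod (v1' - u1') * cmod (v2' - u2')))"
  then obtain u1' v1' u2' v2' where "{u1, v1} = {u1', v1'}" and "{u2, v2} = {u2', v2'}"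
    and t: "t = arccos (\<bar>Re ((v1' - u1') * cnj (v2' - u2'))\<bar> / (cmod (v1' - u1') * cmod (v2' - u2')))"
    by auto
  then have "v1' - u1' = v1 - u1 \<or> v1' - u1' = - (v1 - u1)"
    and "v2' - u2' = v2 - u2 \<or> v2' - u2' = - (v2 - u2)"
    by (auto simp: doubleton_eq_iff)
  then show "t = arccos (\<bar>Re ((v1 - u1) * cnj (v2 - u2))\<bar> / (cmod (v1 - u1) * cmod (v2 - u2)))"
    using t by (elim disjE) (simp_all only: mult_minus_left mult_minus_right complex_cnj_minus
        uminus_complex.sel abs_minus_cancel norm_minus_cancel)
qed (use assms in blast)

lemma Arg_div_pi_rational_if_root_of_unity:
  assumes "w \<noteq> 0" and "n > 0" and root: "(w / cnj w) ^ n = 1"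
  shows "Arg w / pi \<in> \<rat>"
proof -
  have "w = of_real (cmod w) * cis (Arg w)"
    by (metis rcis_cmod_Arg rcis_def)
  then have "w / cnj w = cis (Arg w) / cis (- Arg w)"
    using assms(1) by (metis cis_cnj complex_cnj_complex_of_real complex_cnj_mult
        mult_divide_mult_cancel_left_if norm_eq_zero of_real_eq_0_iff)
  also have "\<dots> = cis (2 * Arg w)"
    by (simp add: cis_divide)
  finally have "cis (real n * (2 * Arg w)) = 1"
    using root by (metis Complex.DeMoivre)
  then obtain m :: int where "real n * (2 * Arg w) = of_int (2 * m) * pi"
    unfolding cis_conv_exp exp_eq_1 by auto
  then have "Arg w / pi = of_int m / of_nat n"
    using assms(2) by (simp add: field_simps)
  then show ?thesis
    by simp
qed

lemma arccos_abs_cos_div_pi_rational: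
  assumes "\<bar>\<phi>\<bar> \<le> pi" and "\<phi> / pi \<in> \<rat>"
  shows "arccos \<bar>cos \<phi>\<bar> / pi \<in> \<rat>"
proof -
  have rational: "\<bar>\<phi>\<bar> / pi \<in> \<rat>"
    using assms(2) Rats_abs_iff [of "\<phi> / pi"] by simp
  have cos_abs: "cos \<bar>\<phi>\<bar> = cos \<phi>"
    by (simp add: abs_if)
  show ?thesis
  proof (cases "cos \<phi> \<ge> 0")
    case True
    then have "arccos \<bar>cos \<phi>\<bar> = \<bar>\<phi>\<bar>"
      using assms(1) cos_abs arccos_cos [of "\<bar>\<phi>\<bar>"] by simp
    then show ?thesis
      using rational by simp
  next
    case False
    then have "arccos \<bar>cos \<phi>\<bar> = pi - \<bar>\<phi>\<bar>"
      using assms(1) cos_abs arccos_cos [of "pi - \<bar>\<phi>\<bar>"] by simp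
    then have "arccos \<bar>cos \<phi>\<bar> / pi = 1 - \<bar>\<phi>\<bar> / pi"
      by (simp add: field_simps)
    then show ?thesis
      using rational by simp
  qed
qed

lemma not_root_of_unity_if_angle_irrational:
  assumes "e1 \<noteq> 0" and "e2 \<noteq> 0"
    and irrational: "arccos (\<bar>Re (e1 * cnj e2)\<bar> / (cmod e1 * cmod e2)) / pi \<notin> \<rat>"
    and "n > 0"
  shows "(e1 / cnj e1 * cnj (e2 / cnj e2)) ^ n \<noteq> 1"
proof
  define w where "w = e1 * cnj e2"
  have "w \<noteq> 0"
    using assms by (simp add: w_def)
  have "e1 / cnj e1 * cnj (e2 / cnj e2) = w / cnj w"
    by (simp add: w_def)
  moreover assume "(e1 / cnj e1 * cnj (e2 / cnj e2)) ^ n = 1"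
  ultimately have "Arg w / pi \<in> \<rat>"
    using Arg_div_pi_rational_if_root_of_unity \<open>w \<noteq> 0\<close> \<open>n > 0\<close> by simp
  then have "arccos \<bar>cos (Arg w)\<bar> / pi \<in> \<rat>"
    using Arg_bounded [of w] by (intro arccos_abs_cos_div_pi_rational) auto
  moreover have "\<bar>cos (Arg w)\<bar> = \<bar>Re (e1 * cnj e2)\<bar> / (cmod e1 * cmod e2)"
    using \<open>w \<noteq> 0\<close> by (simp add: cos_Arg w_def norm_mult)
  ultimately show False
    using irrational by simp
qed

lemma proportional_if_norm_eq_on_crossing_segments:
  assumes f: "f holomorphic_on ball p r" and g: "g holomorphic_on ball p r"
    and "u1 \<noteq> v1" and "u2 \<noteq> v2"
    and "p \<in> closed_segment u1 v1" and "p \<in> closed_segment u2 v2"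
    and irrational:
      "arccos (\<bar>Re ((v1 - u1) * cnj (v2 - u2))\<bar> / (cmod (v1 - u1) * cmod (v2 - u2))) / pi \<notin> \<rat>"
    and "\<And>n. a n \<in> closed_segment u1 v1 - {p}" and "\<And>n. b n \<in> closed_segment u2 v2 - {p}"
    and "a \<longlonglongrightarrow> p" and "b \<longlonglongrightarrow> p"
    and "\<And>n. cmod (f (a n)) = cmod (g (a n))" and "\<And>n. cmod (f (b n)) = cmod (g (b n))"
  shows "\<exists>c. cmod c = 1 \<and> (\<forall>w\<in>ball p r. f w = c * g w)"
proof -
  define \<mu>1 where "\<mu>1 = (v1 - u1) / cnj (v1 - u1)"
  define \<mu>2 where "\<mu>2 = (v2 - u2) / cnj (v2 - u2)"
  have \<mu>: "cmod \<mu>1 = 1" "cmod \<mu>2 = 1"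
    unfolding \<mu>1_def \<mu>2_def using \<open>u1 \<noteq> v1\<close> \<open>u2 \<noteq> v2\<close>
      norm_div_cnj_self [of "v1 - u1"] norm_div_cnj_self [of "v2 - u2"] by auto
  have "(\<mu>1 * cnj \<mu>2) ^ n \<noteq> 1" if "n > 0" for n
    unfolding \<mu>1_def \<mu>2_def using \<open>u1 \<noteq> v1\<close> \<open>u2 \<noteq> v2\<close> irrational that
    by (intro not_root_of_unity_if_angle_irrational) auto
  moreover have "f w * cnj (f (line_reflection p \<mu>1 w)) = g w * cnj (g (line_reflection p \<mu>1 w))"
    if "w \<in> ball p r" for w
    unfolding \<mu>1_def using assms(3,5,8,10,12) that
    by (intro reflected_product_eq_if_norm_eq_on_segment [OF f g])
  moreover have "f w * cnj (f (line_reflection p \<mu>2 w)) = g w * cnj (g (line_reflection p \<mu>2 w))"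
    if "w \<in> ball p r" for w
    unfolding \<mu>2_def using assms(4,6,9,11,13) that
    by (intro reflected_product_eq_if_norm_eq_on_segment [OF f g])
  ultimately show ?thesis
    using proportional_if_reflection_identities [OF f g \<mu>] by blast
qed

lemma proportional_on_connected_if_proportional_on_ball:
  assumes "f holomorphic_on S" and "g holomorphic_on S" and "open S" and "connected S"
    and "ball p r \<subseteq> S" and "r > 0" and "\<And>w. w \<in> ball p r \<Longrightarrow> f w = c * g w"
    and "z \<in> S"
  shows "f z = c * g z"
  by (rule analytic_continuation_open [where s = "ball p r"])
    (use assms in \<open>auto intro: holomorphic_intros\<close>)

theorem corollary2p5:
  fixes f g :: "complex \<Rightarrow> complex" and L1 L2 :: "complex set" and p :: complex
    and \<theta> :: real and a b :: "nat \<Rightarrow> complex"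
  assumes "f holomorphic_on ball 0 1" and "g holomorphic_on ball 0 1"
    and "is_line_segment L1" and "is_line_segment L2"
    and "L1 \<subseteq> ball 0 1" and "L2 \<subseteq> ball 0 1"
    and "p \<in> L1" and "p \<in> L2"
    and "seg_angle L1 L2 = \<theta>"
    and "0 < \<theta>" and "\<theta> < pi / 2" and "\<theta> / pi \<notin> \<rat>"
    and "\<And>n. a n \<in> L1 - {p}" and "\<And>n. b n \<in> L2 - {p}"
    and "a \<longlonglongrightarrow> p" and "b \<longlonglongrightarrow> p"
    and "\<And>n. cmod (f (a n)) = cmod (g (a n))"
    and "\<And>n. cmod (f (b n)) = cmod (g (b n))"
  shows "\<exists>\<beta>. cmod \<beta> = 1 \<and> (\<forall>z\<in>ball 0 1. f z = \<beta> * g z)"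
proof -
  define r where "r = 1 - cmod p"
  have "r > 0"
    using assms(5,7) by (auto simp: r_def)
  have sub: "ball p r \<subseteq> ball 0 1"
    by (simp add: ball_subset_ball_iff r_def)
  obtain u1 v1 u2 v2 where
    "u1 \<noteq> v1" "L1 = closed_segment u1 v1" "u2 \<noteq> v2" "L2 = closed_segment u2 v2"
    using assms(3,4) unfolding is_line_segment_def by blast
  then obtain c where "cmod c = 1" "\<forall>w\<in>ball p r. f w = c * g w"
    using proportional_if_norm_eq_on_crossing_segments
      [OF holomorphic_on_subset [OF assms(1) sub] holomorphic_on_subset [OF assms(2) sub]]
      seg_angle_closed_segment assms(7-18) by metis
  then show ?thesis
    using proportional_on_connected_if_proportional_on_ball [OF assms(1,2) open_ball connected_ball sub]
      \<open>r > 0\<close> by blast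
qed

end
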